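(* Let $p$ be an odd prime and $G$ the non-abelian group of order $p^3$ and exponent $p$. Let $S$ be a sequence over $G$ of length $3p-2$ such that at least $p-2$ terms of $S$ (counted with multiplicity) lie in $Z(G)$. Then $S$ has a non-empty product-one subsequence.
   Context: $G = \langle x, y : x^p = y^p = 1,\ [y,x] \text{ central}\rangle$ is the Heisenberg group of order $p^3$ and exponent $p$, with $Z(G)=[G,G]$ of order $p$. A sequence over $G$ is a finite unordered list (multiset) of elements of $G$; a subsequence is a sub-multiset; a non-empty sequence is product-one if some ordering of its terms has product $1$. *)

theory Defs
  imports "HOL-Algebra.Coset" "HOL-Computational_Algebra.Primes" "HOL-Library.Multiset"
begin

definition group_center :: "('a, 'b) monoid_scheme \<Rightarrow> 'a set" where
  "group_center G = {z \<in> carrier G. \<forall>x \<in> carrier G. z \<otimes>\<^bsub>G\<^esub> x = x \<otimes>\<^bsub>G\<^esub> z}"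

definition list_prod :: "('a, 'b) monoid_scheme \<Rightarrow> 'a list \<Rightarrow> 'a" where
  "list_prod G xs = foldr (\<lambda>x acc. x \<otimes>\<^bsub>G\<^esub> acc) xs \<one>\<^bsub>G\<^esub>"

definition product_one :: "('a, 'b) monoid_scheme \<Rightarrow> 'a multiset \<Rightarrow> bool" where
  "product_one G T \<longleftrightarrow> T \<noteq> {#} \<and> (\<exists>xs. mset xs = T \<and> list_prod G xs = \<one>\<^bsub>G\<^esub>)"

end

(*
  Every element of G is x^a y^b z^c with z = [y, x] central, because G modulo its centre has
  order p^2 and is therefore abelian. Multiplying the terms of a subsequence T in increasing,
  resp. decreasing, index order gives x^A y^B z^C with A, B the sums of the x- and y-exponents
  and C the sum of the z-exponents plus the sum of b_i a_j over the pairs i < j, resp. i > j,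
  in T. So it suffices to find T \<noteq> {} making A, B and one of the two C's divisible by p.

  This is a Chevalley-Warning type argument. If no such T exists, the polynomial
  (1 - A^(p-1)) (1 - B^(p-1)) (2 - P^(p-1) - Q^(p-1)), where P = 2C - AB and Q is the same for
  the reverse order, is congruent mod p to 2 [T = {}] as a function of T. Its alternating sum
  over all T is therefore 2 mod p. But the alternating sum over all subsets of a set I kills
  every polynomial of degree < |I| in the indicator vector of T, and it kills this one: summing
  first over the k \<ge> p - 2 central terms leaves only P^s + Q^s with s \<le> p - 1 - k \<le> 1,
  which is linear because P + Q is, so the remaining degree 3 (p - 1) - k is below the number
  3 p - 2 - k of non-central terms.
*)

theory Submission
  imports Defs "HOL-Algebra.Group_Action" "HOL-Number_Theory.Residues"
begin

section \<open>Alternating sums over subsets\<close>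

definition subset_alt_sum :: "'i set \<Rightarrow> ('i set \<Rightarrow> 'a::comm_ring_1) \<Rightarrow> 'a" where
  "subset_alt_sum I F = (\<Sum>J\<in>Pow I. (-1) ^ card J * F J)"

lemma subset_alt_sum_add:
  "subset_alt_sum I (\<lambda>J. F J + G J) = subset_alt_sum I F + subset_alt_sum I G"
  by (simp add: subset_alt_sum_def distrib_left sum.distrib)

lemma subset_alt_sum_diff:
  "subset_alt_sum I (\<lambda>J. F J - G J) = subset_alt_sum I F - subset_alt_sum I G"
  by (simp add: subset_alt_sum_def right_diff_distrib sum_subtractf)

lemma subset_alt_sum_uminus:
  "subset_alt_sum I (\<lambda>J. - F J) = - subset_alt_sum I F"
  by (simp add: subset_alt_sum_def sum_negf)

lemma subset_alt_sum_mult_left: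
  "subset_alt_sum I (\<lambda>J. c * F J) = c * subset_alt_sum I F"
  by (simp add: subset_alt_sum_def sum_distrib_left mult.left_commute)

lemma subset_alt_sum_mult_right:
  "subset_alt_sum I (\<lambda>J. F J * c) = subset_alt_sum I F * c"
  by (simp add: subset_alt_sum_def sum_distrib_right mult.assoc)

lemma subset_alt_sum_sum:
  "subset_alt_sum I (\<lambda>J. \<Sum>s\<in>S. F s J) = (\<Sum>s\<in>S. subset_alt_sum I (F s))"
  by (simp add: subset_alt_sum_def sum_distrib_left sum.swap[of _ S])

lemma subset_alt_sum_cong:
  assumes "\<And>J. J \<subseteq> I \<Longrightarrow> F J = G J"
  shows "subset_alt_sum I F = subset_alt_sum I G"
  unfolding subset_alt_sum_def using assms by (intro sum.cong) auto

lemma subset_alt_sum_cong_mod: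
  assumes "\<And>J. J \<subseteq> I \<Longrightarrow> [F J = G J] (mod m)"
  shows "[subset_alt_sum I F = subset_alt_sum I G] (mod m)"
  unfolding subset_alt_sum_def using assms by (intro cong_sum cong_mult cong_refl) auto

lemma subset_alt_sum_if_empty:
  assumes "finite I"
  shows "subset_alt_sum I (\<lambda>J. if J = {} then c else 0) = c"
proof -
  have "subset_alt_sum I (\<lambda>J. if J = {} then c else 0) = (\<Sum>J\<in>Pow I. if {} = J then c else 0)"
    unfolding subset_alt_sum_def by (intro sum.cong) auto
  thus ?thesis using assms by simp
qed

lemma subset_alt_sum_superset_indicator:
  assumes "finite I" "S \<subset> I"
  shows "subset_alt_sum I (\<lambda>J. if S \<subseteq> J then 1 else 0) = (0::'a::comm_ring_1)"
proof -
  obtain x where x: "x \<in> I" "x \<notin> S" using assms(2) by blast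
  define I' where "I' = I - {x}"
  have I: "I = insert x I'" "x \<notin> I'" "finite I'" using x assms(1) by (auto simp: I'_def)
  let ?f = "\<lambda>J. (-1::'a) ^ card J * (if S \<subseteq> J then 1 else 0)"
  have "subset_alt_sum I (\<lambda>J. if S \<subseteq> J then 1 else 0) =
      (\<Sum>J\<in>Pow I'. ?f J) + (\<Sum>J\<in>insert x ` Pow I'. ?f J)"
    unfolding subset_alt_sum_def I(1) Pow_insert using I by (intro sum.union_disjoint) auto
  also have "(\<Sum>J\<in>insert x ` Pow I'. ?f J) = (\<Sum>J\<in>Pow I'. ?f (insert x J))"
    using I by (intro sum.reindex_cong[of "insert x"]) (auto simp: inj_on_def)
  also have "\<dots> = (\<Sum>J\<in>Pow I'. - ?f J)"
  proof (rule sum.cong[OF refl])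
    fix J assume "J \<in> Pow I'"
    hence "finite J" "x \<notin> J" using I finite_subset by auto
    hence "card (insert x J) = Suc (card J)" by simp
    moreover have "S \<subseteq> insert x J \<longleftrightarrow> S \<subseteq> J" using x by auto
    ultimately show "?f (insert x J) = - ?f J" by (simp add: algebra_simps)
  qed
  finally show ?thesis by (simp add: sum_negf)
qed

lemma prod_sum_subset_eq_sum_PiE:
  fixes w :: "nat \<Rightarrow> 'i \<Rightarrow> 'a::comm_semiring_1"
  assumes "finite I" "J \<subseteq> I"
  shows "(\<Prod>l<m. \<Sum>i\<in>J. w l i) = (\<Sum>f\<in>PiE {..<m} (\<lambda>_. I).
           (\<Prod>l<m. w l (f l)) * (if f ` {..<m} \<subseteq> J then 1 else 0))"
proof -
  have "(\<Prod>l<m. \<Sum>i\<in>J. w l i) = (\<Prod>l<m. \<Sum>i\<in>I. if i \<in> J then w l i else 0)"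
    using assms by (intro prod.cong refl) (simp add: sum.If_cases Int_absorb1)
  also have "\<dots> = (\<Sum>f\<in>PiE {..<m} (\<lambda>_. I). \<Prod>l<m. if f l \<in> J then w l (f l) else 0)"
    using assms(1) by (intro prod_sum_PiE) auto
  also have "\<dots> = (\<Sum>f\<in>PiE {..<m} (\<lambda>_. I). (\<Prod>l<m. w l (f l)) * (if f ` {..<m} \<subseteq> J then 1 else 0))"
  proof (intro sum.cong refl)
    fix f
    show "(\<Prod>l<m. if f l \<in> J then w l (f l) else 0) =
        (\<Prod>l<m. w l (f l)) * (if f ` {..<m} \<subseteq> J then 1 else 0)"
    proof (cases "f ` {..<m} \<subseteq> J")
      case False
      then obtain l where "l < m" "f l \<notin> J" by auto
      thus ?thesis using False by (auto intro!: prod_zero)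
    qed (auto intro!: prod.cong)
  qed
  finally show ?thesis .
qed

lemma subset_alt_sum_prod_sums:
  fixes w :: "nat \<Rightarrow> 'i \<Rightarrow> 'a::comm_ring_1"
  assumes "finite I" "m < card I"
  shows "subset_alt_sum I (\<lambda>J. \<Prod>l<m. \<Sum>i\<in>J. w l i) = 0"
proof -
  let ?F = "PiE {..<m} (\<lambda>_. I)"
  let ?ind = "\<lambda>f J. if f ` {..<m} \<subseteq> J then 1 else (0::'a)"
  have "subset_alt_sum I (\<lambda>J. \<Prod>l<m. \<Sum>i\<in>J. w l i)
      = subset_alt_sum I (\<lambda>J. \<Sum>f\<in>?F. (\<Prod>l<m. w l (f l)) * ?ind f J)"
    using assms(1) by (intro subset_alt_sum_cong prod_sum_subset_eq_sum_PiE)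
  also have "\<dots> = (\<Sum>f\<in>?F. (\<Prod>l<m. w l (f l)) * subset_alt_sum I (?ind f))"
    by (simp add: subset_alt_sum_sum subset_alt_sum_mult_left)
  also have "\<dots> = 0"
  proof (intro sum.neutral ballI)
    fix f assume "f \<in> ?F"
    hence "f ` {..<m} \<subseteq> I" by auto
    moreover have "card (f ` {..<m}) < card I"
      using card_image_le[of "{..<m}" f] assms(2) by simp
    ultimately have "f ` {..<m} \<subset> I" by auto
    thus "(\<Prod>l<m. w l (f l)) * subset_alt_sum I (?ind f) = 0"
      by (simp add: subset_alt_sum_superset_indicator[OF assms(1)])
  qed
  finally show ?thesis .
qed

lemma prod_lessThan_add:
  "(\<Prod>l<a + b. f l) = (\<Prod>l<a. f l) * (\<Prod>l<b. f (a + l))" for f :: "nat \<Rightarrow> 'a::comm_monoid_mult"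
  by (induction b) (auto simp: ac_simps)

lemma subset_alt_sum_sum_powers:
  assumes "finite I" "a + b + c < card I"
  shows "subset_alt_sum I (\<lambda>J. sum u J ^ a * sum v J ^ b * sum w J ^ c) = 0"
proof -
  define W where "W l = (if l < a then u else if l < a + b then v else w)" for l
  have "(\<Prod>l<a + b + c. sum (W l) J) = sum u J ^ a * sum v J ^ b * sum w J ^ c" for J
    unfolding prod_lessThan_add by (simp add: W_def)
  with subset_alt_sum_prod_sums[OF assms, of W] show ?thesis by simp
qed

lemma subset_alt_sum_shifted_power:
  assumes "finite K"
  shows "subset_alt_sum K (\<lambda>L. (P + sum m L) ^ n) =
    (\<Sum>s\<le>n - card K. of_nat (n choose s) * subset_alt_sum K (\<lambda>L. sum m L ^ (n - s)) * P ^ s)"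
proof -
  have "subset_alt_sum K (\<lambda>L. (P + sum m L) ^ n) =
      (\<Sum>s\<le>n. of_nat (n choose s) * subset_alt_sum K (\<lambda>L. sum m L ^ (n - s)) * P ^ s)"
  proof -
    have "(P + sum m L) ^ n = (\<Sum>s\<le>n. of_nat (n choose s) * (sum m L ^ (n - s)) * P ^ s)" for L
      by (subst binomial_ring) (simp add: mult_ac)
    thus ?thesis
      by (simp add: subset_alt_sum_sum subset_alt_sum_mult_left subset_alt_sum_mult_right mult.assoc)
  qed
  also have "\<dots> = (\<Sum>s\<le>n - card K. of_nat (n choose s) * subset_alt_sum K (\<lambda>L. sum m L ^ (n - s)) * P ^ s)"
  proof (rule sum.mono_neutral_right)
    show "\<forall>s\<in>{..n} - {..n - card K}. of_nat (n choose s) * subset_alt_sum K (\<lambda>L. sum m L ^ (n - s)) * P ^ s = 0"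
    proof
      fix s assume "s \<in> {..n} - {..n - card K}"
      hence "0 + 0 + (n - s) < card K" by auto
      from subset_alt_sum_sum_powers[OF assms this, where w = m] show "of_nat (n choose s) * subset_alt_sum K (\<lambda>L. sum m L ^ (n - s)) * P ^ s = 0"
        by simp
    qed
  qed simp_all
  finally show ?thesis .
qed

lemma subset_alt_sum_const:
  assumes "finite I" "I \<noteq> {}"
  shows "subset_alt_sum I (\<lambda>_. c) = 0"
proof -
  have "0 + 0 + 0 < card I" using assms by (simp add: card_gt_0_iff)
  from subset_alt_sum_sum_powers[OF assms(1) this, where u = "\<lambda>_. c" and v = "\<lambda>_. c" and w = "\<lambda>_. c"]
  show ?thesis using subset_alt_sum_mult_left[of I c "\<lambda>_. 1"] by simp
qed

lemma subset_alt_sum_one_minus_powers: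
  assumes "finite I" "2 * n + s < card I"
  shows "subset_alt_sum I (\<lambda>J. (1 - sum u J ^ n) * (1 - sum v J ^ n) * sum l J ^ s) = 0"
proof -
  have vanish: "subset_alt_sum I (\<lambda>J. sum u J ^ a * sum v J ^ b * sum l J ^ s) = 0"
    if "a \<le> n" "b \<le> n" for a b
    using that assms(2) by (intro subset_alt_sum_sum_powers[OF assms(1)]) linarith
  have "(1 - sum u J ^ n) * (1 - sum v J ^ n) * sum l J ^ s = sum u J ^ 0 * sum v J ^ 0 * sum l J ^ s
      - sum u J ^ n * sum v J ^ 0 * sum l J ^ s - sum u J ^ 0 * sum v J ^ n * sum l J ^ s
      + sum u J ^ n * sum v J ^ n * sum l J ^ s" for J
    by (simp add: algebra_simps)
  thus ?thesis by (simp only: subset_alt_sum_add subset_alt_sum_diff vanish) simp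
qed

lemma subset_alt_sum_split_detector:
  fixes u v l :: "'i \<Rightarrow> 'a::comm_ring_1" and m :: "'j \<Rightarrow> 'a" and P Q :: "'i set \<Rightarrow> 'a"
  assumes I: "finite I" and K: "finite K" "K \<noteq> {}"
    and deg: "n \<le> card K + 1" "3 * n < card I + card K"
    and PQ: "\<And>J. J \<subseteq> I \<Longrightarrow> P J + Q J = 2 * sum l J"
  shows "subset_alt_sum I (\<lambda>J. subset_alt_sum K (\<lambda>L. (1 - sum u J ^ n) * (1 - sum v J ^ n) *
           (2 - (P J + sum m L) ^ n - (Q J + sum m L) ^ n))) = 0"
proof -
  define W where "W J = (1 - sum u J ^ n) * (1 - sum v J ^ n)" for J
  define \<gamma> where "\<gamma> s = of_nat (n choose s) * subset_alt_sum K (\<lambda>L. sum m L ^ (n - s))" for s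
  have inner: "subset_alt_sum K (\<lambda>L. W J * (2 - (P J + sum m L) ^ n - (Q J + sum m L) ^ n))
      = - (\<Sum>s\<le>n - card K. \<gamma> s * (W J * (P J ^ s + Q J ^ s)))" for J
    unfolding subset_alt_sum_mult_left subset_alt_sum_diff subset_alt_sum_const[OF K]
      subset_alt_sum_shifted_power[OF K(1)]
    by (simp add: \<gamma>_def sum_distrib_left sum.distrib algebra_simps)
  have PQ_pow: "P J ^ s + Q J ^ s = 2 * sum l J ^ s" if "J \<subseteq> I" "s \<le> n - card K" for J s
  proof -
    have "s = 0 \<or> s = 1" using that(2) deg(1) by linarith
    thus ?thesis using PQ[OF that(1)] by auto
  qed
  have vanish: "\<gamma> s * subset_alt_sum I (\<lambda>J. W J * sum l J ^ s) = 0" if "s \<le> n - card K" for s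
  proof (cases "n - s < card K")
    case True
    then show ?thesis
      using subset_alt_sum_sum_powers[OF K(1), of 0 0 "n - s" _ _ m] by (simp add: \<gamma>_def)
  next
    case False
    hence "2 * n + s < card I" using that deg by linarith
    thus ?thesis unfolding W_def by (simp add: subset_alt_sum_one_minus_powers[OF I])
  qed
  have "subset_alt_sum I (\<lambda>J. subset_alt_sum K (\<lambda>L. W J * (2 - (P J + sum m L) ^ n - (Q J + sum m L) ^ n)))
      = subset_alt_sum I (\<lambda>J. - (\<Sum>s\<le>n - card K. 2 * \<gamma> s * (W J * sum l J ^ s)))"
  proof (intro subset_alt_sum_cong)
    fix J assume "J \<subseteq> I"
    thus "subset_alt_sum K (\<lambda>L. W J * (2 - (P J + sum m L) ^ n - (Q J + sum m L) ^ n))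
        = - (\<Sum>s\<le>n - card K. 2 * \<gamma> s * (W J * sum l J ^ s))"
      unfolding inner by (intro arg_cong[where f = uminus] sum.cong) (simp_all add: PQ_pow)
  qed
  also have "\<dots> = - (\<Sum>s\<le>n - card K. 2 * (\<gamma> s * subset_alt_sum I (\<lambda>J. W J * sum l J ^ s)))"
    by (simp only: subset_alt_sum_uminus subset_alt_sum_sum mult.assoc subset_alt_sum_mult_left)
  also have "\<dots> = 0" by (simp add: vanish)
  finally show ?thesis by (simp add: W_def mult.assoc)
qed

section \<open>The polynomial method\<close>

lemma fermat_theorem_int:
  fixes a :: int
  assumes "prime p" "\<not> int p dvd a"
  shows "[a ^ (p - 1) = 1] (mod int p)"
proof -
  interpret residues "int p" "residue_ring (int p)"
    using prime_gt_1_nat[OF assms(1)] by unfold_locales simp_all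
  have "coprime a (int p)"
    using assms prime_imp_coprime[of "int p" a] by (simp add: coprime_commute)
  from euler_theorem[OF this] show ?thesis
    using totient_prime[OF assms(1)] by simp
qed

lemma one_minus_pow_cong_indicator:
  fixes a :: int
  assumes "prime p"
  shows "[1 - a ^ (p - 1) = (if int p dvd a then 1 else 0)] (mod int p)"
proof (cases "int p dvd a")
  case True
  have "int p dvd a ^ (p - 1)"
    using dvd_trans[OF True dvd_power[of "p - 1" a]] prime_gt_1_nat[OF assms] by simp
  hence "[1 - a ^ (p - 1) = 1 - 0] (mod int p)"
    by (intro cong_diff cong_refl) (simp add: cong_0_iff)
  thus ?thesis using True by simp
next
  case False
  hence "[1 - a ^ (p - 1) = 1 - 1] (mod int p)"
    by (intro cong_diff cong_refl fermat_theorem_int assms)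
  thus ?thesis using False by simp
qed

lemma detector_cong_zero:
  fixes a b s t :: int
  assumes p: "prime p" "odd p"
    and nondiv: "int p dvd a \<Longrightarrow> int p dvd b \<Longrightarrow> \<not> int p dvd s \<and> \<not> int p dvd t"
  shows "[(1 - a ^ (p - 1)) * (1 - b ^ (p - 1)) *
          (2 - (2 * s - a * b) ^ (p - 1) - (2 * t - a * b) ^ (p - 1)) = 0] (mod int p)"
proof -
  let ?ind = "\<lambda>x::int. if int p dvd x then 1 else 0 :: int"
  have two_minus: "2 - x - y = (1 - x) + (1 - y)" for x y :: int by simp
  have "[(1 - a ^ (p - 1)) * (1 - b ^ (p - 1)) *
          (2 - (2 * s - a * b) ^ (p - 1) - (2 * t - a * b) ^ (p - 1))
        = ?ind a * ?ind b * (?ind (2 * s - a * b) + ?ind (2 * t - a * b))] (mod int p)"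
    unfolding two_minus by (intro cong_mult cong_add one_minus_pow_cong_indicator p(1))
  moreover have "?ind a * ?ind b * (?ind (2 * s - a * b) + ?ind (2 * t - a * b)) = 0"
  proof (cases "int p dvd a \<and> int p dvd b")
    case True
    have "p \<noteq> 2" using p(2) by auto
    hence "int p > 2" using prime_ge_2_nat[OF p(1)] by linarith
    hence "\<not> int p dvd 2" using zdvd_imp_le[of "int p" 2] by linarith
    hence "\<not> int p dvd 2 * x" if "\<not> int p dvd x" for x
      using that p(1) prime_dvd_mult_iff[of "int p" 2 x] by simp
    moreover have "int p dvd a * b" using True by simp
    ultimately have "\<not> int p dvd 2 * x - a * b" if "\<not> int p dvd x" for x
      using that dvd_add[of "int p" "2 * x - a * b" "a * b"] by auto
    thus ?thesis using nondiv True by simp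
  qed auto
  ultimately show ?thesis by simp
qed

definition pair_sum :: "('i \<Rightarrow> 'i \<Rightarrow> bool) \<Rightarrow> ('i \<Rightarrow> 'a) \<Rightarrow> ('i \<Rightarrow> 'a) \<Rightarrow> 'i set \<Rightarrow> 'a::semiring_0"
  where "pair_sum R u v T = (\<Sum>i\<in>T. u i * (\<Sum>j\<in>{j\<in>T. R i j}. v j))"

lemma sum_mult_sum_eq_pair_sums:
  fixes u v :: "'i::linorder \<Rightarrow> 'a::comm_semiring_0"
  assumes "finite J"
  shows "sum u J * sum v J = (\<Sum>i\<in>J. u i * v i) + pair_sum (<) v u J + pair_sum (>) v u J"
proof -
  have split: "sum u J = u i + sum u {j\<in>J. i < j} + sum u {j\<in>J. i > j}" if "i \<in> J" for i
  proof -
    have "J = insert i ({j\<in>J. i < j} \<union> {j\<in>J. i > j})" using that by auto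
    hence "sum u J = u i + sum u ({j\<in>J. i < j} \<union> {j\<in>J. i > j})"
      using assms by (metis (no_types, lifting) finite_insert mem_Collect_eq order_less_irrefl
          sum.insert UnE)
    also have "\<dots> = u i + (sum u {j\<in>J. i < j} + sum u {j\<in>J. i > j})"
      using assms by (subst sum.union_disjoint) auto
    finally show ?thesis by (simp add: add.assoc)
  qed
  have "sum u J * sum v J = (\<Sum>i\<in>J. v i * sum u J)"
    by (subst mult.commute) (rule sum_distrib_right)
  also have "\<dots> = (\<Sum>i\<in>J. u i * v i + v i * sum u {j\<in>J. i < j} + v i * sum u {j\<in>J. i > j})"
    by (intro sum.cong refl) (simp add: split distrib_left mult.commute)
  finally show ?thesis by (simp add: pair_sum_def sum.distrib)
qed

lemma pair_sum_union_vanishing: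
  assumes "finite J" "finite K" "J \<inter> K = {}" "\<And>i. i \<in> K \<Longrightarrow> u i = 0 \<and> v i = 0"
  shows "pair_sum R u v (J \<union> K) = pair_sum R u v J"
proof -
  have inner: "sum v {j \<in> J \<union> K. R i j} = sum v {j \<in> J. R i j}" for i
  proof -
    have "{j \<in> J \<union> K. R i j} = {j \<in> J. R i j} \<union> {j \<in> K. R i j}" by auto
    hence "sum v {j \<in> J \<union> K. R i j} = sum v {j \<in> J. R i j} + sum v {j \<in> K. R i j}"
      using assms(1-3) by (simp add: sum.union_disjoint disjoint_iff)
    thus ?thesis using assms(4) by simp
  qed
  have "pair_sum R u v (J \<union> K) = (\<Sum>i\<in>J. u i * sum v {j \<in> J \<union> K. R i j})
      + (\<Sum>i\<in>K. u i * sum v {j \<in> J \<union> K. R i j})"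
    unfolding pair_sum_def using assms(1-3) by (rule sum.union_disjoint)
  also have "(\<Sum>i\<in>K. u i * sum v {j \<in> J \<union> K. R i j}) = 0" using assms(4) by simp
  finally show ?thesis by (simp only: inner pair_sum_def) simp
qed

lemma of_nat_pair_sum:
  "of_nat (pair_sum R u v T) = pair_sum R (\<lambda>i. of_nat (u i)) (\<lambda>i. of_nat (v i)) T"
  by (simp add: pair_sum_def)

lemma pair_sum_insert_least:
  assumes "finite S" "i \<notin> S" "asymp R" "\<And>j. j \<in> S \<Longrightarrow> R i j"
  shows "pair_sum R u v (insert i S) = u i * sum v S + pair_sum R u v S"
proof -
  have "{j \<in> insert i S. R i j} = S" using assms(3,4) by (auto dest: asympD)
  moreover have "{j \<in> insert i S. R k j} = {j \<in> S. R k j}" if "k \<in> S" for k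
    using assms(3,4) that by (auto dest: asympD)
  ultimately show ?thesis using assms(1,2) by (simp add: pair_sum_def)
qed

definition detector :: "nat \<Rightarrow> (nat \<Rightarrow> int) \<Rightarrow> (nat \<Rightarrow> int) \<Rightarrow> (nat \<Rightarrow> int) \<Rightarrow> nat set \<Rightarrow> int"
  where "detector n u v c T = (1 - sum u T ^ n) * (1 - sum v T ^ n) *
    (2 - (2 * (sum c T + pair_sum (<) v u T) - sum u T * sum v T) ^ n
       - (2 * (sum c T + pair_sum (>) v u T) - sum u T * sum v T) ^ n)"

lemma detector_cong:
  assumes p: "prime p" "odd p"
    and none: "T \<noteq> {} \<Longrightarrow> int p dvd sum u T \<Longrightarrow> int p dvd sum v T \<Longrightarrow>
      \<not> int p dvd sum c T + pair_sum (<) v u T \<and> \<not> int p dvd sum c T + pair_sum (>) v u T"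
  shows "[detector (p - 1) u v c T = (if T = {} then 2 else 0)] (mod int p)"
proof (cases "T = {}")
  case True
  have "0 < p - 1" using prime_gt_1_nat[OF p(1)] by simp
  thus ?thesis using True by (simp add: detector_def pair_sum_def zero_power)
next
  case False
  have "[detector (p - 1) u v c T = 0] (mod int p)"
    unfolding detector_def using none[OF False] by (intro detector_cong_zero p)
  thus ?thesis using False by simp
qed

lemma subset_alt_sum_detector_union:
  fixes u v c :: "nat \<Rightarrow> int"
  assumes fin: "finite I" "finite Z" and disj: "I \<inter> Z = {}"
    and uv: "\<And>i. i \<in> Z \<Longrightarrow> u i = 0 \<and> v i = 0"
    and deg: "Z \<noteq> {}" "n \<le> card Z + 1" "3 * n < card I + card Z"
  shows "subset_alt_sum I (\<lambda>J. subset_alt_sum Z (\<lambda>K. detector n u v c (J \<union> K))) = 0"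
proof -
  define P where "P R J = 2 * (sum c J + pair_sum R v u J) - sum u J * sum v J" for R J
  have split: "detector n u v c (J \<union> K) = (1 - sum u J ^ n) * (1 - sum v J ^ n) *
      (2 - (P (<) J + sum (\<lambda>i. 2 * c i) K) ^ n - (P (>) J + sum (\<lambda>i. 2 * c i) K) ^ n)"
    if J: "J \<subseteq> I" and K: "K \<subseteq> Z" for J K
  proof -
    have finJK: "finite J" "finite K" "J \<inter> K = {}"
      using J K fin disj by (auto intro: finite_subset)
    have sums: "sum u (J \<union> K) = sum u J" "sum v (J \<union> K) = sum v J"
        "sum c (J \<union> K) = sum c J + sum c K"
      using finJK uv K by (auto simp: sum.union_disjoint intro: sum.neutral)
    have pairs: "pair_sum R v u (J \<union> K) = pair_sum R v u J" for R
      using finJK uv K by (intro pair_sum_union_vanishing) auto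
    have "2 * (sum c (J \<union> K) + pair_sum R v u (J \<union> K)) - sum u J * sum v J
        = P R J + sum (\<lambda>i. 2 * c i) K" for R
      by (simp add: P_def sums pairs sum_distrib_left)
    thus ?thesis unfolding detector_def sums(1,2) by (simp only:)
  qed
  have "subset_alt_sum I (\<lambda>J. subset_alt_sum Z (\<lambda>K. detector n u v c (J \<union> K)))
      = subset_alt_sum I (\<lambda>J. subset_alt_sum Z (\<lambda>K. (1 - sum u J ^ n) * (1 - sum v J ^ n) *
          (2 - (P (<) J + sum (\<lambda>i. 2 * c i) K) ^ n - (P (>) J + sum (\<lambda>i. 2 * c i) K) ^ n)))"
    by (intro subset_alt_sum_cong) (simp add: split)
  also have "\<dots> = 0"
  proof (rule subset_alt_sum_split_detector[where l = "\<lambda>i. 2 * c i - u i * v i", OF fin deg])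
    fix J assume "J \<subseteq> I"
    hence "finite J" using fin(1) finite_subset by blast
    hence "sum u J * sum v J = (\<Sum>i\<in>J. u i * v i) + pair_sum (<) v u J + pair_sum (>) v u J"
      by (rule sum_mult_sum_eq_pair_sums)
    thus "P (<) J + P (>) J = 2 * (\<Sum>i\<in>J. 2 * c i - u i * v i)"
      unfolding P_def sum_subtractf by (simp add: sum_distrib_left sum_negf)
  qed
  finally show ?thesis .
qed

lemma subset_alt_sum_union_if_empty:
  assumes "finite I" "finite Z"
  shows "subset_alt_sum I (\<lambda>J. subset_alt_sum Z (\<lambda>K. if J = {} \<and> K = {} then c else 0)) = c"
proof -
  have inner: "subset_alt_sum Z (\<lambda>K. if J = {} \<and> K = {} then c else 0) = (if J = {} then c else 0)"
    for J
    using assms(2) by (cases "J = {}") (simp add: subset_alt_sum_if_empty, simp add: subset_alt_sum_def)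
  show ?thesis by (simp only: inner subset_alt_sum_if_empty[OF assms(1)])
qed

lemma exists_subset_with_divisible_sums:
  fixes u v c :: "nat \<Rightarrow> int"
  assumes p: "prime p" "odd p" and N: "finite N" "card N = 3 * p - 2"
    and Z: "Z \<subseteq> N" "p - 2 \<le> card Z" and uv: "\<And>i. i \<in> Z \<Longrightarrow> u i = 0 \<and> v i = 0"
  shows "\<exists>T\<subseteq>N. T \<noteq> {} \<and> int p dvd sum u T \<and> int p dvd sum v T \<and>
           (\<exists>R\<in>{(<), (>)}. int p dvd sum c T + pair_sum R v u T)"
proof (rule ccontr)
  assume none: "\<not> ?thesis"
  define I where "I = N - Z"
  have p3: "p \<ge> 3" using prime_ge_2_nat[OF p(1)] p(2) by (cases "p = 2") auto
  have fin: "finite I" "finite Z" using N Z by (auto simp: I_def finite_subset)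
  have card_IZ: "card I + card Z = 3 * p - 2"
    using N Z(1) fin(2) card_mono[OF N(1) Z(1)] by (simp add: I_def card_Diff_subset)
  have "[subset_alt_sum I (\<lambda>J. subset_alt_sum Z (\<lambda>K. detector (p - 1) u v c (J \<union> K)))
      = subset_alt_sum I (\<lambda>J. subset_alt_sum Z (\<lambda>K. if J \<union> K = {} then 2 else 0))] (mod int p)"
  proof (intro subset_alt_sum_cong_mod detector_cong p)
    fix J K assume "J \<subseteq> I" "K \<subseteq> Z"
    hence "J \<union> K \<subseteq> N" using Z(1) by (auto simp: I_def)
    thus "\<not> int p dvd sum c (J \<union> K) + pair_sum (<) v u (J \<union> K) \<and>
        \<not> int p dvd sum c (J \<union> K) + pair_sum (>) v u (J \<union> K)"
      if "J \<union> K \<noteq> {}" "int p dvd sum u (J \<union> K)" "int p dvd sum v (J \<union> K)"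
      using none that by blast
  qed
  moreover have "subset_alt_sum I (\<lambda>J. subset_alt_sum Z (\<lambda>K. detector (p - 1) u v c (J \<union> K))) = 0"
    using fin uv Z(2) card_IZ p3
    by (intro subset_alt_sum_detector_union) (auto simp: I_def)
  ultimately have "[0 = 2] (mod int p)" by (simp add: subset_alt_sum_union_if_empty[OF fin])
  hence "int p dvd 2" by (simp add: cong_def dvd_eq_mod_eq_0)
  thus False using p3 zdvd_imp_le[of "int p" 2] by linarith
qed

section \<open>The centre of a p-group\<close>

context group
begin

abbreviation conjugation :: "'a \<Rightarrow> 'a \<Rightarrow> 'a" where
  "conjugation \<equiv> \<lambda>g. \<lambda>h \<in> carrier G. g \<otimes> h \<otimes> inv g"

lemma group_center_subset: "group_center G \<subseteq> carrier G"
  by (auto simp: group_center_def)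

lemma finite_carrier_of_prime_power_order: "prime p \<Longrightarrow> order G = p ^ n \<Longrightarrow> finite (carrier G)"
  by (simp add: order_gt_0_iff_finite[symmetric] prime_gt_0_nat)

lemma orbit_conjugation_eq_singleton_iff:
  assumes "x \<in> carrier G"
  shows "orbit G conjugation x = {x} \<longleftrightarrow> x \<in> group_center G"
proof -
  have "conjugation \<one> x = x" using assms by simp
  hence "orbit G conjugation x = {x} \<longleftrightarrow> (\<forall>g\<in>carrier G. conjugation g x = x)"
    unfolding orbit_def by (auto simp del: restrict_apply) (metis one_closed)
  thus ?thesis
    using assms by (simp add: group_center_def inv_solve_right' eq_commute[of "x \<otimes> _"])
qed

lemma stabilizer_conjugation_iff:
  "x \<in> carrier G \<Longrightarrow> z \<in> stabilizer G conjugation x \<longleftrightarrow> z \<in> carrier G \<and> z \<otimes> x = x \<otimes> z"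
  by (auto simp: stabilizer_def inv_solve_right')

lemma subgroup_group_center: "subgroup (group_center G) G"
proof -
  interpret conj: group_action G "carrier G" conjugation by (rule action_by_conjugation)
  have "group_center G = \<Inter> (stabilizer G conjugation ` carrier G)"
    by (auto simp: group_center_def stabilizer_conjugation_iff) (use one_closed in blast)
  thus ?thesis by (auto intro: subgroups_Inter conj.stabilizer_subgroup)
qed

lemma prime_dvd_card_orbit_conjugation:
  assumes p: "prime p" and ord: "order G = p ^ n"
    and x: "x \<in> carrier G" "x \<notin> group_center G"
  shows "p dvd card (orbit G conjugation x)"
proof -
  interpret conj: group_action G "carrier G" conjugation by (rule action_by_conjugation)
  have "card (orbit G conjugation x) dvd p ^ n"
    using conj.orbit_stabilizer_theorem[OF x(1)] ord
    by (intro dvdI[of _ _ "card (stabilizer G conjugation x)"]) simp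
  then obtain i where i: "card (orbit G conjugation x) = p ^ i"
    using divides_primepow_nat[OF p] by blast
  have "i \<noteq> 0"
  proof
    assume "i = 0"
    with i obtain y where "orbit G conjugation x = {y}" by (auto simp: card_1_singleton_iff)
    with conj.orbit_refl[OF x(1)] have "orbit G conjugation x = {x}" by simp
    with x show False by (simp add: orbit_conjugation_eq_singleton_iff)
  qed
  thus ?thesis using i by simp
qed

lemma orbit_conjugation_disjoint_group_center:
  assumes "x \<in> carrier G" "x \<notin> group_center G"
  shows "orbit G conjugation x \<inter> group_center G = {}"
proof -
  interpret conj: group_action G "carrier G" conjugation by (rule action_by_conjugation)
  have False if y: "y \<in> orbit G conjugation x" "y \<in> group_center G" for y
  proof -
    have "y \<in> carrier G" using y(2) group_center_subset by blast
    hence "x \<in> orbit G conjugation y" using conj.orbit_sym assms(1) y(1) by blast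
    moreover have "orbit G conjugation y = {y}"
      using y(2) \<open>y \<in> carrier G\<close> by (simp add: orbit_conjugation_eq_singleton_iff)
    ultimately show False using y(2) assms(2) by simp
  qed
  thus ?thesis by blast
qed

lemma prime_dvd_card_group_center:
  assumes p: "prime p" and ord: "order G = p ^ n" "n \<ge> 1"
  shows "p dvd card (group_center G)"
proof -
  interpret conj: group_action G "carrier G" conjugation by (rule action_by_conjugation)
  let ?Z = "group_center G"
  define f where "f x = (if x \<in> ?Z then 0 else 1 :: nat)" for x
  have fin: "finite (carrier G)" using finite_carrier_of_prime_power_order[OF p ord(1)] .
  have "p dvd sum f Orb" if "Orb \<in> orbits G (carrier G) conjugation" for Orb
  proof -
    from that obtain x where x: "x \<in> carrier G" and Orb: "Orb = orbit G conjugation x"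
      unfolding orbits_def by blast
    show ?thesis
    proof (cases "x \<in> ?Z")
      case True
      hence "Orb = {x}" using Orb x by (simp add: orbit_conjugation_eq_singleton_iff)
      thus ?thesis using True by (simp add: f_def)
    next
      case False
      hence "f y = 1" if "y \<in> Orb" for y
        using orbit_conjugation_disjoint_group_center[OF x] Orb that by (auto simp: f_def)
      hence "sum f Orb = card Orb" by simp
      thus ?thesis using prime_dvd_card_orbit_conjugation[OF p ord(1) x False] Orb by simp
    qed
  qed
  hence "p dvd (\<Sum>Orb\<in>orbits G (carrier G) conjugation. sum f Orb)" by (rule dvd_sum)
  also have "\<dots> = sum f (carrier G)" by (rule conj.disjoint_sum[OF fin])
  also have "\<dots> = card (carrier G - ?Z)" using fin by (simp add: f_def sum.If_cases Diff_eq)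
  also have "\<dots> = card (carrier G) - card ?Z"
    using group_center_subset fin by (intro card_Diff_subset) (auto intro: finite_subset)
  finally have "p dvd card (carrier G) - card ?Z" .
  moreover have "p dvd card (carrier G)" using ord by (simp add: order_def)
  ultimately have "p dvd card (carrier G) - (card (carrier G) - card ?Z)"
    by (simp only: dvd_diff_nat)
  moreover have "card ?Z \<le> card (carrier G)" using fin group_center_subset by (rule card_mono)
  ultimately show ?thesis by simp
qed

lemma card_group_center_less_card_stabilizer:
  assumes fin: "finite (carrier G)" and g: "g \<in> carrier G" "g \<notin> group_center G"
  shows "card (group_center G) < card (stabilizer G conjugation g)"
proof -
  interpret conj: group_action G "carrier G" conjugation by (rule action_by_conjugation)
  have "insert g (group_center G) \<subseteq> stabilizer G conjugation g"
    using g(1) by (auto simp: stabilizer_conjugation_iff group_center_def)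
  moreover have "finite (stabilizer G conjugation g)"
    using conj.stabilizer_subset[of g] fin by (rule finite_subset)
  ultimately have "card (insert g (group_center G)) \<le> card (stabilizer G conjugation g)"
    by (rule card_mono[rotated])
  thus ?thesis using g(2) finite_subset[OF group_center_subset fin] by simp
qed

lemma card_group_center_mult_prime_neq_order:
  assumes p: "prime p" and ord: "order G = p ^ m"
  shows "card (group_center G) * p \<noteq> order G"
proof
  interpret conj: group_action G "carrier G" conjugation by (rule action_by_conjugation)
  let ?Z = "group_center G"
  assume eq: "card ?Z * p = order G"
  have fin: "finite (carrier G)" using finite_carrier_of_prime_power_order[OF p ord] .
  hence "0 < card ?Z" using eq by (metis card_gt_0_iff gr0I mult_0 one_closed empty_iff order_def)
  hence "card ?Z < card ?Z * p" using prime_gt_1_nat[OF p] by simp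
  hence "card ?Z < card (carrier G)" using eq by (simp add: order_def)
  hence "\<not> carrier G \<subseteq> ?Z"
    using card_mono[OF finite_subset[OF group_center_subset fin], of "carrier G"] by linarith
  then obtain g where g: "g \<in> carrier G" "g \<notin> ?Z" by blast
  have "p \<le> card (orbit G conjugation g)"
  proof (rule dvd_imp_le)
    show "p dvd card (orbit G conjugation g)"
      using prime_dvd_card_orbit_conjugation[OF p ord g] .
    have "orbit G conjugation g \<subseteq> carrier G" unfolding orbit_def using g(1) by auto
    thus "0 < card (orbit G conjugation g)"
      using conj.orbit_refl[OF g(1)] fin by (auto simp: card_gt_0_iff intro: finite_subset)
  qed
  hence "card ?Z * p < card (stabilizer G conjugation g) * card (orbit G conjugation g)"
    using card_group_center_less_card_stabilizer[OF fin g] prime_gt_0_nat[OF p]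
    by (intro mult_less_le_imp_less) auto
  also have "\<dots> = order G" using conj.orbit_stabilizer_theorem[OF g(1)] by (simp add: mult.commute)
  finally show False using eq by simp
qed

lemma card_group_center_prime_power:
  assumes p: "prime p" and ord: "order G = p ^ n" "n \<ge> 1"
  obtains i where "card (group_center G) = p ^ i" "1 \<le> i" "i \<le> n" "i \<noteq> n - 1"
proof -
  have "card (group_center G) dvd p ^ n"
    using lagrange[OF subgroup_group_center] ord by (metis dvd_triv_right)
  then obtain i where i: "card (group_center G) = p ^ i" "i \<le> n"
    using divides_primepow_nat[OF p] by auto
  have "i \<noteq> 0"
    using i prime_dvd_card_group_center[OF p ord] p by (metis power_0 nat_dvd_1_iff_1 not_prime_1)
  moreover have "i \<noteq> n - 1"
  proof
    assume "i = n - 1"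
    hence "card (group_center G) * p = order G"
      using i ord by (simp add: power_Suc2[symmetric])
    thus False using card_group_center_mult_prime_neq_order[OF p ord(1)] by simp
  qed
  ultimately show ?thesis using i that by simp
qed

lemma group_center_eq_carrier:
  assumes "finite (carrier G)" "card (group_center G) = order G"
  shows "group_center G = carrier G"
  using assms group_center_subset by (intro card_subset_eq) (simp_all add: order_def)

lemma abelian_of_order_prime_square:
  assumes p: "prime p" and ord: "order G = p ^ 2" and xy: "x \<in> carrier G" "y \<in> carrier G"
  shows "x \<otimes> y = y \<otimes> x"
proof -
  obtain i where "card (group_center G) = p ^ i" "1 \<le> i" "i \<le> 2" "i \<noteq> 1"
    using card_group_center_prime_power[OF p ord] by auto
  hence "card (group_center G) = order G" using ord by (simp add: le_Suc_eq numeral_2_eq_2)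
  hence "group_center G = carrier G"
    by (rule group_center_eq_carrier[OF finite_carrier_of_prime_power_order[OF p ord]])
  thus ?thesis using xy by (auto simp: group_center_def)
qed

lemma card_group_center_of_order_prime_cube:
  assumes p: "prime p" and ord: "order G = p ^ 3"
    and xy: "x \<in> carrier G" "y \<in> carrier G" "x \<otimes> y \<noteq> y \<otimes> x"
  shows "card (group_center G) = p"
proof -
  obtain i where i: "card (group_center G) = p ^ i" "1 \<le> i" "i \<le> 3" "i \<noteq> 2"
    using card_group_center_prime_power[OF p ord] by auto
  have "i \<noteq> 3"
  proof
    assume "i = 3"
    hence "group_center G = carrier G"
      using i ord finite_carrier_of_prime_power_order[OF p ord] by (intro group_center_eq_carrier) auto
    thus False using xy by (auto simp: group_center_def)
  qed
  hence "i = 1" using i by linarith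
  thus ?thesis using i by simp
qed

lemma heisenberg_commutator:
  assumes p: "prime p" and ord: "order G = p ^ 3"
    and xy: "x \<in> carrier G" "y \<in> carrier G" "x \<otimes> y \<noteq> y \<otimes> x"
  obtains z where "z \<in> group_center G" "z \<noteq> \<one>" "y \<otimes> x = x \<otimes> y \<otimes> z"
proof -
  let ?Z = "group_center G"
  interpret N: normal ?Z G
  proof (rule normalI[OF subgroup_group_center], rule ballI)
    fix g assume "g \<in> carrier G"
    thus "?Z #> g = g <# ?Z"
      unfolding r_coset_def l_coset_def by (intro SUP_cong refl) (simp add: group_center_def)
  qed
  have "card (rcosets ?Z) * p = p ^ 3"
    using lagrange[OF subgroup_group_center] card_group_center_of_order_prime_cube[OF assms] ord
    by simp
  hence "order (G Mod ?Z) = p ^ 2"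
    using prime_gt_0_nat[OF p] by (simp add: order_def FactGroup_def power_numeral_reduce)
  moreover have "?Z #> x \<in> carrier (G Mod ?Z)" "?Z #> y \<in> carrier (G Mod ?Z)"
    using xy by (simp_all add: FactGroup_def rcosetsI N.subset)
  ultimately have "(?Z #> x) \<otimes>\<^bsub>G Mod ?Z\<^esub> (?Z #> y) = (?Z #> y) \<otimes>\<^bsub>G Mod ?Z\<^esub> (?Z #> x)"
    using group.abelian_of_order_prime_square[OF N.factorgroup_is_group p] by blast
  hence "?Z #> (x \<otimes> y) = ?Z #> (y \<otimes> x)" using xy by (simp add: FactGroup_def N.rcos_sum)
  hence "y \<otimes> x \<in> ?Z #> (x \<otimes> y)"
    using xy by (intro repr_independenceD[OF subgroup_group_center]) auto
  hence h: "(y \<otimes> x) \<otimes> inv (x \<otimes> y) \<in> ?Z" (is "?h \<in> ?Z")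
    using xy by (intro N.rcos_module_imp) (simp_all add: is_group)
  have "y \<otimes> x = ?h \<otimes> (x \<otimes> y)" using xy by (simp add: m_assoc)
  also have "\<dots> = x \<otimes> y \<otimes> ?h"
    using h m_closed[OF xy(1,2)] unfolding group_center_def by blast
  finally have yx: "y \<otimes> x = x \<otimes> y \<otimes> ?h" .
  moreover have "?h \<noteq> \<one>" using yx xy by auto
  ultimately show ?thesis using h that by blast
qed

lemma nat_pow_group_center:
  "w \<in> group_center G \<Longrightarrow> w [^] (n::nat) \<in> group_center G"
  using subgroup_group_center
  by (induction n) (auto intro: subgroup.m_closed subgroup.one_closed)

lemma pow_commutator_central:
  fixes a b :: nat
  assumes gh: "g \<in> carrier G" "h \<in> carrier G" and w: "w \<in> group_center G"
    and comm: "h \<otimes> g = g \<otimes> h \<otimes> w"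
  shows "h [^] b \<otimes> g [^] a = g [^] a \<otimes> h [^] b \<otimes> w [^] (a * b)"
proof -
  have wc: "w [^] n \<in> group_center G" for n :: nat
    using w by (rule nat_pow_group_center)
  have central: "v \<otimes> k = k \<otimes> v" if "v \<in> group_center G" "k \<in> carrier G" for v k
    using that by (auto simp: group_center_def)
  have wcar: "w [^] n \<in> carrier G" for n :: nat using wc by (auto simp: group_center_def)
  have w_car: "w \<in> carrier G" using w by (auto simp: group_center_def)
  have left: "h \<otimes> g [^] a = g [^] a \<otimes> h \<otimes> w [^] a" for a :: nat
  proof (induction a)
    case (Suc a)
    have "h \<otimes> g [^] Suc a = (g [^] a \<otimes> h \<otimes> w [^] a) \<otimes> g"
      using gh by (simp add: Suc m_assoc[symmetric])
    also have "\<dots> = g [^] a \<otimes> (h \<otimes> g) \<otimes> w [^] a"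
      using gh wcar central[OF wc, of g] by (simp add: m_assoc)
    also have "\<dots> = g [^] Suc a \<otimes> h \<otimes> w [^] Suc a"
      using gh w wcar central[OF w, of h] by (simp add: comm m_assoc nat_pow_mult[symmetric]
          nat_pow_Suc2[of w] group_center_def)
    finally show ?case .
  qed (use gh in simp)
  show ?thesis
  proof (induction b)
    case (Suc b)
    have "h [^] Suc b \<otimes> g [^] a = h [^] b \<otimes> (h \<otimes> g [^] a)"
      using gh by (simp add: nat_pow_Suc2 m_assoc)
    also have "\<dots> = (h [^] b \<otimes> g [^] a) \<otimes> h \<otimes> w [^] a"
      using gh wcar by (simp add: left m_assoc)
    also have "\<dots> = g [^] a \<otimes> h [^] Suc b \<otimes> w [^] (a * Suc b)"
      using gh w_car central[OF wc, of h] by (simp add: Suc m_assoc nat_pow_mult add.commute)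
    finally show ?case .
  qed (use gh in simp)
qed

end

lemma (in monoid) list_prod_Nil [simp]: "list_prod G [] = \<one>"
  by (simp add: list_prod_def)

lemma (in monoid) list_prod_Cons [simp]: "list_prod G (g # gs) = g \<otimes> list_prod G gs"
  by (simp add: list_prod_def)

lemma mset_map_nth_subseteq:
  assumes "distinct is" "set is \<subseteq> {..<length ws}"
  shows "mset (map (nth ws) is) \<subseteq># mset ws"
proof -
  have "mset (map (nth ws) is) = image_mset (nth ws) (mset_set (set is))"
    using assms(1) by (simp add: mset_set_set)
  also have "\<dots> \<subseteq># image_mset (nth ws) (mset_set {..<length ws})"
    using assms(2) by (intro image_mset_subseteq_mono) (simp add: finite_subset)
  also have "\<dots> = mset ws"
    by (metis map_nth mset_map mset_upt atLeast0LessThan)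
  finally show ?thesis .
qed

lemma exists_sorted_list_less_greater:
  fixes T :: "'a::linorder set"
  assumes "finite T" "R \<in> {(<), (>)}"
  shows "\<exists>ts. set ts = T \<and> distinct ts \<and> sorted_wrt R ts"
proof -
  obtain ts where ts: "sorted_wrt (<) ts" "set ts = T"
    using ex1_sorted_list_for_set_if_finite[OF assms(1)] by blast
  hence "distinct ts" by (simp add: strict_sorted_iff)
  from assms(2) consider "R = (<)" | "R = (>)" by blast
  thus ?thesis
  proof cases
    case 2
    thus ?thesis using ts \<open>distinct ts\<close> by (intro exI[of _ "rev ts"]) (simp add: sorted_wrt_rev)
  qed (use ts \<open>distinct ts\<close> in blast)
qed

section \<open>Coordinates in the Heisenberg group\<close>

locale heisenberg = group G for G (structure) +
  fixes p :: nat and x y z :: 'a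
  assumes prime: "prime p" and order_eq: "order G = p ^ 3"
    and exponent: "\<And>g. g \<in> carrier G \<Longrightarrow> g [^] p = \<one>"
    and x_closed [simp]: "x \<in> carrier G" and y_closed [simp]: "y \<in> carrier G"
    and z_central: "z \<in> group_center G" and z_ne_one: "z \<noteq> \<one>"
    and commutator: "y \<otimes> x = x \<otimes> y \<otimes> z"
begin

definition xyz :: "nat \<Rightarrow> nat \<Rightarrow> nat \<Rightarrow> 'a" where
  "xyz a b c = x [^] a \<otimes> y [^] b \<otimes> z [^] c"

lemma z_closed [simp]: "z \<in> carrier G"
  using z_central by (simp add: group_center_def)

lemma xyz_closed [simp]: "xyz a b c \<in> carrier G"
  by (simp add: xyz_def)

lemma z_pow_commute: "g \<in> carrier G \<Longrightarrow> z [^] (n::nat) \<otimes> g = g \<otimes> z [^] n"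
  using nat_pow_group_center[OF z_central] by (simp add: group_center_def)

lemma xyz_mult: "xyz a b c \<otimes> xyz a' b' c' = xyz (a + a') (b + b') (c + c' + b * a')"
proof -
  have pow_pow: "g [^] i \<otimes> (g [^] j \<otimes> r) = g [^] (i + j) \<otimes> r"
    if "g \<in> carrier G" "r \<in> carrier G" for g r and i j :: nat
    using that by (simp add: m_assoc[symmetric] nat_pow_mult)
  have z_pow_left: "z [^] n \<otimes> (g \<otimes> r) = g \<otimes> (z [^] n \<otimes> r)"
    if "g \<in> carrier G" "r \<in> carrier G" for g r and n :: nat
    using that by (simp add: m_assoc[symmetric] z_pow_commute[OF that(1)])
  have y_pow_x_pow: "y [^] j \<otimes> (x [^] i \<otimes> r) = x [^] i \<otimes> (y [^] j \<otimes> (z [^] (i * j) \<otimes> r))"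
    if "r \<in> carrier G" for r and i j :: nat
    using that pow_commutator_central[OF x_closed y_closed z_central commutator, of j i]
    by (simp add: m_assoc[symmetric])
  show ?thesis
    by (simp add: xyz_def m_assoc pow_pow z_pow_left[of "x [^] _"] z_pow_left[of "y [^] _"]
        y_pow_x_pow nat_pow_mult z_pow_commute[of "y [^] _"] ac_simps)
qed

lemma pow_eq_one_if_dvd: "g \<in> carrier G \<Longrightarrow> p dvd n \<Longrightarrow> g [^] n = \<one>"
  by (elim dvdE) (simp add: nat_pow_pow[symmetric] exponent)

lemma xyz_eq_one: "p dvd a \<Longrightarrow> p dvd b \<Longrightarrow> p dvd c \<Longrightarrow> xyz a b c = \<one>"
  by (simp add: xyz_def pow_eq_one_if_dvd)

lemma xyz_generators [simp]: "xyz 1 0 0 = x" "xyz 0 1 0 = y" "xyz 0 0 c = z [^] c"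
  by (simp_all add: xyz_def)

lemma y_mult_xyz: "y \<otimes> xyz a b c = xyz a b c \<otimes> y \<otimes> z [^] a"
  using xyz_mult[of 0 1 0 a b c] xyz_mult[of a b c 0 1 0] xyz_mult[of a "b + 1" c 0 0 a]
  by (simp add: xyz_generators[simplified])

lemma xyz_mult_x: "xyz a b c \<otimes> x = x \<otimes> xyz a b c \<otimes> z [^] b"
  using xyz_mult[of a b c 1 0 0] xyz_mult[of 1 0 0 a b c] xyz_mult[of "a + 1" b c 0 0 b]
  by (simp add: xyz_generators[simplified])

lemma ord_z: "ord z = p"
proof -
  have "ord z dvd p" using pow_eq_id[OF z_closed] exponent[OF z_closed] by simp
  moreover have "ord z \<noteq> 1" using ord_eq_1[OF z_closed] z_ne_one by simp
  ultimately show ?thesis using prime by (auto simp: prime_nat_iff)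
qed

lemma z_pow_inj: "inj_on (\<lambda>i. z [^] i) {..<p}"
  using ord_inj[OF z_closed] prime_gt_0_nat[OF prime] by (simp add: ord_z atLeast0AtMost lessThan_Suc_atMost[symmetric])

lemma xyz_inj_on: "inj_on (\<lambda>(a, b, c). xyz a b c) ({..<p} \<times> {..<p} \<times> {..<p})"
proof (rule inj_onI, clarsimp)
  fix a b c a' b' c'
  assume bounds: "a < p" "b < p" "c < p" "a' < p" "b' < p" "c' < p" and eq: "xyz a b c = xyz a' b' c'"
  have "xyz a b c \<otimes> y \<otimes> z [^] a = xyz a b c \<otimes> y \<otimes> z [^] a'"
    using y_mult_xyz[of a b c] y_mult_xyz[of a' b' c'] eq by simp
  hence a: "a = a'" using z_pow_inj bounds by (simp add: m_assoc inj_on_def)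
  have "x \<otimes> xyz a b c \<otimes> z [^] b = x \<otimes> xyz a b c \<otimes> z [^] b'"
    using xyz_mult_x[of a b c] xyz_mult_x[of a' b' c'] eq by simp
  hence b: "b = b'" using z_pow_inj bounds by (simp add: m_assoc inj_on_def)
  have "x [^] a \<otimes> y [^] b \<otimes> z [^] c = x [^] a \<otimes> y [^] b \<otimes> z [^] c'"
    using eq a b by (simp add: xyz_def)
  hence "c = c'" using z_pow_inj bounds by (simp add: m_assoc inj_on_def)
  with a b show "a = a' \<and> b = b' \<and> c = c'" by simp
qed

lemma xyz_surj:
  assumes "g \<in> carrier G"
  shows "\<exists>a<p. \<exists>b<p. \<exists>c<p. g = xyz a b c"
proof -
  let ?D = "{..<p} \<times> {..<p} \<times> {..<p}"
  have "card ((\<lambda>(a, b, c). xyz a b c) ` ?D) = card (carrier G)"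
    using card_image[OF xyz_inj_on] order_eq by (simp add: order_def card_cartesian_product power3_eq_cube)
  moreover have "finite (carrier G)" by (rule finite_carrier_of_prime_power_order[OF prime order_eq])
  ultimately have "(\<lambda>(a, b, c). xyz a b c) ` ?D = carrier G" by (intro card_subset_eq) auto
  thus ?thesis using assms by force
qed

lemma group_center_xyz:
  assumes "g \<in> group_center G"
  shows "\<exists>c. g = xyz 0 0 c"
proof -
  have g: "g \<in> carrier G" "\<And>h. h \<in> carrier G \<Longrightarrow> g \<otimes> h = h \<otimes> g"
    using assms by (auto simp: group_center_def)
  obtain a b c where abc: "a < p" "b < p" "g = xyz a b c" using xyz_surj[OF g(1)] by blast
  have "g \<otimes> y \<otimes> z [^] a = g \<otimes> y \<otimes> z [^] (0::nat)"
    using y_mult_xyz[of a b c] g(2)[of y] abc by simp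
  hence "a = 0" using z_pow_inj abc prime_gt_0_nat[OF prime] g(1) by (simp add: m_assoc inj_on_def)
  moreover have "x \<otimes> g \<otimes> z [^] b = x \<otimes> g \<otimes> z [^] (0::nat)"
    using xyz_mult_x[of a b c] g(2)[of x] abc by simp
  hence "b = 0" using z_pow_inj abc prime_gt_0_nat[OF prime] g(1) by (simp add: m_assoc inj_on_def)
  ultimately show ?thesis using abc by blast
qed

lemma xyz_coordinates:
  obtains a b c where "\<And>g. g \<in> carrier G \<Longrightarrow> g = xyz (a g) (b g) (c g)"
    and "\<And>g. g \<in> group_center G \<Longrightarrow> a g = 0 \<and> b g = 0"
proof -
  have "\<forall>g. \<exists>a b c. g \<in> carrier G \<longrightarrow> g = xyz a b c \<and> (g \<in> group_center G \<longrightarrow> a = 0 \<and> b = 0)"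
    using xyz_surj group_center_xyz by metis
  then obtain a b c where "\<And>g. g \<in> carrier G \<Longrightarrow> g = xyz (a g) (b g) (c g) \<and>
      (g \<in> group_center G \<longrightarrow> a g = 0 \<and> b g = 0)"
    by metis
  thus ?thesis using that group_center_subset by blast
qed

lemma list_prod_xyz:
  assumes "asymp R" "sorted_wrt R is"
  shows "list_prod G (map (\<lambda>i. xyz (a i) (b i) (c i)) is)
    = xyz (sum a (set is)) (sum b (set is)) (sum c (set is) + pair_sum R b a (set is))"
  using assms(2)
proof (induction "is")
  case Nil
  show ?case by (simp add: xyz_def pair_sum_def)
next
  case (Cons i "is")
  have "i \<notin> set is" using Cons.prems assms(1) by (auto dest: asympD)
  moreover have "R i j" if "j \<in> set is" for j using Cons.prems that by simp
  ultimately show ?case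
    using Cons assms(1) by (simp add: xyz_mult pair_sum_insert_least algebra_simps)
qed


lemma exists_product_one_sublist:
  assumes ws: "set ws \<subseteq> carrier G" "length ws = 3 * p - 2"
    and central: "p - 2 \<le> card {i\<in>{..<length ws}. ws ! i \<in> group_center G}" and "odd p"
  shows "\<exists>ts. ts \<noteq> [] \<and> distinct ts \<and> set ts \<subseteq> {..<length ws} \<and> list_prod G (map (nth ws) ts) = \<one>"
proof -
  obtain a b c where abc: "\<And>g. g \<in> carrier G \<Longrightarrow> g = xyz (a g) (b g) (c g)"
    and ab: "\<And>g. g \<in> group_center G \<Longrightarrow> a g = 0 \<and> b g = 0"
    using xyz_coordinates by blast
  define A B C where "A i = a (ws ! i)" and "B i = b (ws ! i)" and "C i = c (ws ! i)" for i
  have "\<exists>T\<subseteq>{..<length ws}. T \<noteq> {} \<and> int p dvd (\<Sum>i\<in>T. int (A i)) \<and> int p dvd (\<Sum>i\<in>T. int (B i)) \<and>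
      (\<exists>R\<in>{(<), (>)}. int p dvd (\<Sum>i\<in>T. int (C i)) + pair_sum R (\<lambda>i. int (B i)) (\<lambda>i. int (A i)) T)"
    using ws(2) central ab
    by (intro exists_subset_with_divisible_sums[OF prime \<open>odd p\<close>]) (auto simp: A_def B_def)
  then obtain T R where T: "T \<subseteq> {..<length ws}" "T \<noteq> {}" "R \<in> {(<), (>)}"
      "p dvd sum A T" "p dvd sum B T" "p dvd sum C T + pair_sum R B A T"
    by (auto simp flip: of_nat_sum of_nat_pair_sum of_nat_add)
  obtain ts where ts: "set ts = T" "distinct ts" "sorted_wrt R ts"
    using exists_sorted_list_less_greater[OF finite_subset[OF T(1) finite_lessThan] T(3)] by blast
  have "list_prod G (map (nth ws) ts) = list_prod G (map (\<lambda>i. xyz (A i) (B i) (C i)) ts)"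
  proof (intro arg_cong[where f = "list_prod G"] map_cong refl)
    fix i assume "i \<in> set ts"
    hence "ws ! i \<in> carrier G" using T(1) ts(1) ws(1) by (auto intro: nth_mem)
    thus "ws ! i = xyz (A i) (B i) (C i)" unfolding A_def B_def C_def by (rule abc)
  qed
  also have "\<dots> = \<one>"
  proof -
    have "asymp R" using T(3) by auto
    thus ?thesis using T(4-6) by (simp add: list_prod_xyz[OF _ ts(3)] ts(1) xyz_eq_one)
  qed
  finally show ?thesis using T(1,2) ts(1,2) by auto
qed
end

theorem theorem2p6:
  fixes G :: "('a, 'b) monoid_scheme" and p :: nat and S :: "'a multiset"
  assumes "prime p" and "odd p"
    and "group G"
    and "order G = p ^ 3"
    and "\<exists>x \<in> carrier G. \<exists>y \<in> carrier G. x \<otimes>\<^bsub>G\<^esub> y \<noteq> y \<otimes>\<^bsub>G\<^esub> x"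
    and "\<forall>x \<in> carrier G. x [^]\<^bsub>G\<^esub> p = \<one>\<^bsub>G\<^esub>"
    and "set_mset S \<subseteq> carrier G"
    and "size S = 3 * p - 2"
    and "size (filter_mset (\<lambda>x. x \<in> group_center G) S) \<ge> p - 2"
  shows "\<exists>T. T \<subseteq># S \<and> product_one G T"
proof -
  interpret group G by fact
  obtain x y where xy: "x \<in> carrier G" "y \<in> carrier G" "x \<otimes>\<^bsub>G\<^esub> y \<noteq> y \<otimes>\<^bsub>G\<^esub> x"
    using assms(5) by blast
  obtain z where "z \<in> group_center G" "z \<noteq> \<one>\<^bsub>G\<^esub>" "y \<otimes>\<^bsub>G\<^esub> x = x \<otimes>\<^bsub>G\<^esub> y \<otimes>\<^bsub>G\<^esub> z"
    using heisenberg_commutator[OF assms(1,4) xy] .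
  then interpret heisenberg G p x y z
    using assms xy by unfold_locales auto
  obtain ws where S: "S = mset ws" using ex_mset by metis
  have "card {i\<in>{..<length ws}. ws ! i \<in> group_center G} = size (filter_mset (\<lambda>x. x \<in> group_center G) S)"
    unfolding S mset_filter[symmetric] size_mset length_filter_conv_card by auto
  then obtain ts where ts: "ts \<noteq> []" "distinct ts" "set ts \<subseteq> {..<length ws}"
      "list_prod G (map (nth ws) ts) = \<one>\<^bsub>G\<^esub>"
    using exists_product_one_sublist[of ws] assms(2,7-9) by (auto simp: S)
  hence "product_one G (mset (map (nth ws) ts))" unfolding product_one_def by (metis mset_map mset_zero_iff map_is_Nil_conv)
  moreover have "mset (map (nth ws) ts) \<subseteq># S" using ts(2,3) S mset_map_nth_subseteq by auto
  ultimately show ?thesis by blast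
qed

end
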